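(* Let $\mathcal{S}$ be a finite set of road segments and $y_1,\dots,y_N$ (collectively $y_{[N]}$) the routes of $N$ historical trips, each a nonempty set of distinct segments. For each $n$ and $s\in y_n$ one observes $T'_{n,s}=\theta_s+\varepsilon_{n,s}$, where the $\theta_s$ are i.i.d. with mean $\mu$ and variance $\tau^2>0$, independent of the errors; for each $n$ the errors $(\varepsilon_{n,s})_{s\in y_n}$ have mean $0$ and covariances $\sigma_{s,t}$; errors from different trips are independent. Suppose $\sigma_{s,t}\ge0$ for all $s,t\in\mathcal{S}$. Fix a route $y$ and a neighborhood $\delta(y)$ (a set of historical routes) such that $$N_{s\cup t}N^{\delta(y)}_sN^{\delta(y)}_t\le N^{\delta(y)}_{s\cup t}N_sN_t\quad\text{for all } s,t\in y.$$ Let $\hat\Theta^{\ast(\mathrm{seg})}_y$ be the optimal segment-based estimator and $\hat\Theta^{\ast(\mathrm{route})}_y$ the optimal route-based estimator with neighborhood $\delta(y)$. Then for any set of historical routes, $$R\big(\hat\Theta^{\ast(\mathrm{seg})}_y\mid y_{[N]}\big)\le R\big(\hat\Theta^{\ast(\mathrm{route})}_y\mid y_{[N]}\big).$$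
   Context: $N_s=|\{n:s\in y_n\}|$, $N_{s\cup t}=|\{n:s,t\in y_n\}|$, $N^{\delta(y)}_s=|\{n:y_n\in\delta(y),s\in y_n\}|$, $N^{\delta(y)}_{s\cup t}=|\{n:y_n\in\delta(y),s,t\in y_n\}|$, $M_{\delta(y)}=\sum_n\mathbf 1\{y_n\in\delta(y)\}$; convention $0/0=0$. The integrated risk is $R(\hat\Theta_y\mid y_{[N]})=\mathbb{E}[(\hat\Theta_y-\sum_{s\in y}\theta_s)^2\mid y_{[N]}]$, expectation over errors and prior of $\theta$, conditional on the historical routes. A segment-based estimator has the form $\sum_{s\in y}[(1-\phi_s(N_s))\mu+\phi_s(N_s)\sum_{n:s\in y_n}T'_{n,s}/N_s]$ with $\phi_s:\mathbb{Z}_{\ge0}\to\mathbb{R}$, $\phi_s(0)=0$; the optimal one chooses the weights to minimize the integrated risk. A route-based estimator with neighborhood $\delta(y)$ has the form $(1-\phi_{\delta(y)}(M_{\delta(y)}))|y|\mu+\phi_{\delta(y)}(M_{\delta(y)})\sum_{n:y_n\in\delta(y)}\sum_{s\in y_n}T'_{n,s}/M_{\delta(y)}$ with $\phi_{\delta(y)}(0)=0$; the optimal one chooses the weight to minimize the integrated risk. *)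

theory Defs
  imports "HOL-Probability.Probability"
begin

(* Historical routes: y :: nat => 'a set, trips indexed by n < N. *)

definition Nseg :: "nat \<Rightarrow> (nat \<Rightarrow> 'a set) \<Rightarrow> 'a \<Rightarrow> nat" where
  "Nseg N y s = card {n. n < N \<and> s \<in> y n}"

definition Npair :: "nat \<Rightarrow> (nat \<Rightarrow> 'a set) \<Rightarrow> 'a \<Rightarrow> 'a \<Rightarrow> nat" where
  "Npair N y s t = card {n. n < N \<and> s \<in> y n \<and> t \<in> y n}"

definition Nseg_nb :: "nat \<Rightarrow> (nat \<Rightarrow> 'a set) \<Rightarrow> 'a set set \<Rightarrow> 'a \<Rightarrow> nat" where
  "Nseg_nb N y D s = card {n. n < N \<and> y n \<in> D \<and> s \<in> y n}"

definition Npair_nb :: "nat \<Rightarrow> (nat \<Rightarrow> 'a set) \<Rightarrow> 'a set set \<Rightarrow> 'a \<Rightarrow> 'a \<Rightarrow> nat" where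
  "Npair_nb N y D s t = card {n. n < N \<and> y n \<in> D \<and> s \<in> y n \<and> t \<in> y n}"

definition Mnb :: "nat \<Rightarrow> (nat \<Rightarrow> 'a set) \<Rightarrow> 'a set set \<Rightarrow> nat" where
  "Mnb N y D = card {n. n < N \<and> y n \<in> D}"

definition Tobs :: "('a \<Rightarrow> 'w \<Rightarrow> real) \<Rightarrow> (nat \<Rightarrow> 'a \<Rightarrow> 'w \<Rightarrow> real) \<Rightarrow> nat \<Rightarrow> 'a \<Rightarrow> 'w \<Rightarrow> real" where
  "Tobs \<theta> \<epsilon> n s \<omega> = \<theta> s \<omega> + \<epsilon> n s \<omega>"

(* segment-based estimator with weight functions phi_s (phi s 0 = 0); division 0/0 = 0 *)
definition seg_est :: "nat \<Rightarrow> (nat \<Rightarrow> 'a set) \<Rightarrow> ('a \<Rightarrow> 'w \<Rightarrow> real) \<Rightarrow> (nat \<Rightarrow> 'a \<Rightarrow> 'w \<Rightarrow> real)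
    \<Rightarrow> real \<Rightarrow> 'a set \<Rightarrow> ('a \<Rightarrow> nat \<Rightarrow> real) \<Rightarrow> 'w \<Rightarrow> real" where
  "seg_est N y \<theta> \<epsilon> \<mu> yy \<phi> \<omega> =
     (\<Sum>s\<in>yy. (1 - \<phi> s (Nseg N y s)) * \<mu>
        + \<phi> s (Nseg N y s) * ((\<Sum>n\<in>{n. n < N \<and> s \<in> y n}. Tobs \<theta> \<epsilon> n s \<omega>) / real (Nseg N y s)))"

(* route-based estimator with neighbourhood D and weight function phi (phi 0 = 0) *)
definition route_est :: "nat \<Rightarrow> (nat \<Rightarrow> 'a set) \<Rightarrow> ('a \<Rightarrow> 'w \<Rightarrow> real) \<Rightarrow> (nat \<Rightarrow> 'a \<Rightarrow> 'w \<Rightarrow> real)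
    \<Rightarrow> real \<Rightarrow> 'a set \<Rightarrow> 'a set set \<Rightarrow> (nat \<Rightarrow> real) \<Rightarrow> 'w \<Rightarrow> real" where
  "route_est N y \<theta> \<epsilon> \<mu> yy D \<phi> \<omega> =
     (1 - \<phi> (Mnb N y D)) * real (card yy) * \<mu>
     + \<phi> (Mnb N y D) * ((\<Sum>n\<in>{n. n < N \<and> y n \<in> D}. \<Sum>s\<in>y n. Tobs \<theta> \<epsilon> n s \<omega>) / real (Mnb N y D))"

(* integrated risk: E[(Theta_hat - sum_{s in y} theta_s)^2], routes fixed *)
definition risk :: "'w measure \<Rightarrow> ('a \<Rightarrow> 'w \<Rightarrow> real) \<Rightarrow> 'a set \<Rightarrow> ('w \<Rightarrow> real) \<Rightarrow> real" where
  "risk M \<theta> yy \<Theta> = (\<integral>\<omega>. (\<Theta> \<omega> - (\<Sum>s\<in>yy. \<theta> s \<omega>))\<^sup>2 \<partial>M)"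

(* joint random element: index Inl s -> theta_s, index Inr n -> error vector of trip n *)
definition model_var :: "(nat \<Rightarrow> 'a set) \<Rightarrow> ('a \<Rightarrow> 'w \<Rightarrow> real) \<Rightarrow> (nat \<Rightarrow> 'a \<Rightarrow> 'w \<Rightarrow> real)
    \<Rightarrow> 'a + nat \<Rightarrow> 'w \<Rightarrow> ('a \<Rightarrow> real)" where
  "model_var y \<theta> \<epsilon> i \<omega> = (case i of Inl s \<Rightarrow> (\<lambda>t\<in>{s}. \<theta> s \<omega>)
                                    | Inr n \<Rightarrow> (\<lambda>t\<in>y n. \<epsilon> n t \<omega>))"

definition model_space :: "(nat \<Rightarrow> 'a set) \<Rightarrow> 'a + nat \<Rightarrow> ('a \<Rightarrow> real) measure" where
  "model_space y i = (case i of Inl s \<Rightarrow> PiM {s} (\<lambda>_. borel)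
                               | Inr n \<Rightarrow> PiM (y n) (\<lambda>_. borel))"

end

theory Submission
  imports Defs
begin

(* Fix any route weight and put q = phi(M) / M, the weight it gives each neighbouring trip.
   Both estimators err by an affine combination of the centred segment effects theta_s - mu
   and the observation errors eps_{n,s}; by independence, such a combination has risk
   b^2 + tau^2 sum_s a_s^2 + sum_n sum_{s,t in y_n} c_{n,s} c_{n,t} sigma_{s,t}.
   The segment estimator with weights q N^delta_s has no bias term, the same theta-coefficients
   on y and none elsewhere, and its error part is
   sum_{s,t in y} N_{s u t} (q N^delta_s / N_s) (q N^delta_t / N_t) sigma_{s,t}
   <= q^2 sum_{s,t in y} N^delta_{s u t} sigma_{s,t}
   by the neighbourhood condition; as sigma >= 0 this is at most the error part of the route
   estimator. *)

lemma (in prob_space) indep_var_compose_components: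
  assumes indep: "indep_vars M' X I" and "i \<in> I" "j \<in> I" "i \<noteq> j"
    and "f \<in> borel_measurable (M' i)" "g \<in> borel_measurable (M' j)"
  shows "indep_var borel (\<lambda>\<omega>. f (X i \<omega>)) borel (\<lambda>\<omega>. g (X j \<omega>))"
proof -
  have "indep_var borel ((\<lambda>h. f (h i)) \<circ> (\<lambda>\<omega>. restrict (\<lambda>k. X k \<omega>) {i}))
                   borel ((\<lambda>h. g (h j)) \<circ> (\<lambda>\<omega>. restrict (\<lambda>k. X k \<omega>) {j}))"
    using assms
    by (intro indep_var_compose[OF indep_var_restrict[OF indep]])
       (auto intro!: measurable_compose[OF measurable_component_singleton])
  then show ?thesis by (simp add: comp_def)
qed

lemma integrable_mult_if_square_integrable:
  fixes f g :: "'a \<Rightarrow> real"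
  assumes "f \<in> borel_measurable M" "g \<in> borel_measurable M"
    and "integrable M (\<lambda>x. (f x)\<^sup>2)" "integrable M (\<lambda>x. (g x)\<^sup>2)"
  shows "integrable M (\<lambda>x. f x * g x)"
proof (rule Bochner_Integration.integrable_bound)
  show "integrable M (\<lambda>x. (f x)\<^sup>2 + (g x)\<^sup>2)" using assms by simp
  show "AE x in M. norm (f x * g x) \<le> norm ((f x)\<^sup>2 + (g x)\<^sup>2)"
  proof (intro AE_I2)
    fix x
    have "\<bar>f x\<bar> * \<bar>g x\<bar> \<le> 2 * \<bar>f x\<bar> * \<bar>g x\<bar>" by simp
    also have "\<dots> \<le> (f x)\<^sup>2 + (g x)\<^sup>2"
      using sum_squares_bound[of "\<bar>f x\<bar>" "\<bar>g x\<bar>"] by simp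
    finally show "norm (f x * g x) \<le> norm ((f x)\<^sup>2 + (g x)\<^sup>2)"
      by (simp add: abs_mult)
  qed
qed (use assms in simp)

lemma (in prob_space) expectation_square_affine_comb:
  fixes Z :: "'i \<Rightarrow> 'a \<Rightarrow> real"
  assumes "finite J"
    and integrable: "\<And>i. i \<in> J \<Longrightarrow> integrable M (Z i)"
    and mean: "\<And>i. i \<in> J \<Longrightarrow> expectation (Z i) = 0"
    and integrable_mult: "\<And>i j. i \<in> J \<Longrightarrow> j \<in> J \<Longrightarrow> integrable M (\<lambda>\<omega>. Z i \<omega> * Z j \<omega>)"
    and cov: "\<And>i j. i \<in> J \<Longrightarrow> j \<in> J \<Longrightarrow> expectation (\<lambda>\<omega>. Z i \<omega> * Z j \<omega>) = K i j"
  shows "expectation (\<lambda>\<omega>. (b + (\<Sum>i\<in>J. w i * Z i \<omega>))\<^sup>2) = b\<^sup>2 + (\<Sum>i\<in>J. \<Sum>j\<in>J. w i * w j * K i j)"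
proof -
  define L where "L = (\<lambda>\<omega>. \<Sum>i\<in>J. (2 * b * w i) * Z i \<omega>)"
  define Q where "Q = (\<lambda>\<omega>. \<Sum>i\<in>J. \<Sum>j\<in>J. (w i * w j) * (Z i \<omega> * Z j \<omega>))"
  have expand: "(b + (\<Sum>i\<in>J. w i * Z i \<omega>))\<^sup>2 = b\<^sup>2 + L \<omega> + Q \<omega>" for \<omega>
    by (simp add: L_def Q_def power2_eq_square sum_product sum_distrib_left algebra_simps)
  have "integrable M L" "expectation L = 0"
    using integrable mean by (auto simp: L_def Bochner_Integration.integral_sum)
  moreover have "integrable M Q" "expectation Q = (\<Sum>i\<in>J. \<Sum>j\<in>J. w i * w j * K i j)"
    using integrable_mult cov by (simp_all add: Q_def Bochner_Integration.integral_sum)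
  ultimately show ?thesis
    by (simp add: expand prob_space)
qed

lemma sum_routes_eq_sum_card:
  fixes f :: "'a \<Rightarrow> real"
  assumes "finite S" "finite T" "\<And>n. n \<in> T \<Longrightarrow> y n \<subseteq> S"
  shows "(\<Sum>n\<in>T. \<Sum>s\<in>y n. f s) = (\<Sum>s\<in>S. real (card {n\<in>T. s \<in> y n}) * f s)"
proof -
  have "(\<Sum>n\<in>T. \<Sum>s\<in>y n. f s) = (\<Sum>n\<in>T. \<Sum>s\<in>{s\<in>S. s \<in> y n}. f s)"
    using assms(3) by (intro sum.cong refl arg_cong[where f = "sum f"]) auto
  also have "\<dots> = (\<Sum>s\<in>S. \<Sum>n\<in>{n\<in>T. s \<in> y n}. f s)"
    using sum.swap_restrict[where A = T and B = S and g = "\<lambda>_. f" and R = "\<lambda>n s. s \<in> y n"] assms(1,2)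
    by simp
  finally show ?thesis by simp
qed

lemma sum_routes_pairs_eq_sum_card:
  fixes g :: "'a \<Rightarrow> 'a \<Rightarrow> real"
  assumes "finite A" "finite T"
  shows "(\<Sum>n\<in>T. \<Sum>s\<in>y n \<inter> A. \<Sum>t\<in>y n \<inter> A. g s t)
       = (\<Sum>s\<in>A. \<Sum>t\<in>A. real (card {n\<in>T. s \<in> y n \<and> t \<in> y n}) * g s t)"
proof -
  have restrict: "y n \<inter> A = {s\<in>A. s \<in> y n}" for n by auto
  have "(\<Sum>n\<in>T. \<Sum>s\<in>y n \<inter> A. \<Sum>t\<in>y n \<inter> A. g s t)
      = (\<Sum>s\<in>A. \<Sum>n\<in>{n\<in>T. s \<in> y n}. \<Sum>t\<in>{t\<in>A. t \<in> y n}. g s t)"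
    unfolding restrict using assms
    by (simp add: sum.swap_restrict[where A = T and B = A and R = "\<lambda>n s. s \<in> y n"])
  also have "\<dots> = (\<Sum>s\<in>A. \<Sum>t\<in>A. \<Sum>n\<in>{n\<in>{n\<in>T. s \<in> y n}. t \<in> y n}. g s t)"
    using assms by (intro sum.cong refl sum.swap_restrict) auto
  finally show ?thesis by (simp add: conj_assoc)
qed

lemma sum_weighted_routes_swap:
  fixes c :: "'a \<Rightarrow> real" and h :: "nat \<Rightarrow> 'a \<Rightarrow> real"
  assumes "finite A" "\<And>n. n < N \<Longrightarrow> finite (y n)"
  shows "(\<Sum>s\<in>A. c s * (\<Sum>n | n < N \<and> s \<in> y n. h n s))
       = (\<Sum>n<N. \<Sum>s\<in>y n. (if s \<in> A then c s else 0) * h n s)"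
proof -
  have "(\<Sum>s\<in>A. c s * (\<Sum>n | n < N \<and> s \<in> y n. h n s)) = (\<Sum>n<N. \<Sum>s | s \<in> A \<and> s \<in> y n. c s * h n s)"
    using sum.swap_restrict[where A = A and B = "{..<N}" and R = "\<lambda>s n. s \<in> y n"] assms(1)
    by (simp add: sum_distrib_left)
  also have "\<dots> = (\<Sum>n<N. \<Sum>s\<in>y n. (if s \<in> A then c s else 0) * h n s)"
  proof (rule sum.cong[OF refl])
    fix n assume "n \<in> {..<N}"
    then have "(\<Sum>s | s \<in> A \<and> s \<in> y n. c s * h n s) = (\<Sum>s\<in>y n. if s \<in> A then c s * h n s else 0)"
      using sum.inter_restrict[OF assms(2), of n "\<lambda>s. c s * h n s" A] by (simp add: Int_def conj_commute)
    then show "(\<Sum>s | s \<in> A \<and> s \<in> y n. c s * h n s) = (\<Sum>s\<in>y n. (if s \<in> A then c s else 0) * h n s)"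
      by (simp add: if_distrib[of "\<lambda>x. x * _"] cong: if_cong)
  qed
  finally show ?thesis .
qed

lemma scaled_pair_count_le:
  fixes q \<sigma> :: real and p pd ds dt ns nt :: nat
  assumes "\<sigma> \<ge> 0" and count: "p * ds * dt \<le> pd * ns * nt"
  shows "real p * (q * ds / ns) * (q * dt / nt) * \<sigma> \<le> real pd * q\<^sup>2 * \<sigma>"
proof (cases "ns = 0 \<or> nt = 0")
  case True
  then show ?thesis using assms by auto
next
  case False
  have "real p * (q * ds / ns) * (q * dt / nt) * \<sigma> = (q\<^sup>2 * \<sigma>) * (real (p * ds * dt) / (ns * nt))"
    by (simp add: field_simps power2_eq_square)
  also have "\<dots> \<le> (q\<^sup>2 * \<sigma>) * real pd"
    using False count \<open>\<sigma> \<ge> 0\<close>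
    by (intro mult_left_mono) (simp_all add: divide_le_eq of_nat_le_iff[symmetric, where 'a = real])
  finally show ?thesis by (simp add: mult_ac)
qed

lemma Nseg_nb_le_Nseg: "Nseg_nb N y D s \<le> Nseg N y s"
  unfolding Nseg_nb_def Nseg_def by (rule card_mono) auto

locale travel_time_model = prob_space M for M :: "'w measure" +
  fixes S :: "'a set" and N :: nat and y :: "nat \<Rightarrow> 'a set"
    and \<theta> :: "'a \<Rightarrow> 'w \<Rightarrow> real" and \<epsilon> :: "nat \<Rightarrow> 'a \<Rightarrow> 'w \<Rightarrow> real"
    and \<mu> \<tau> :: real and \<sigma> :: "'a \<Rightarrow> 'a \<Rightarrow> real"
  assumes finite_segments: "finite S"
    and routes_subset: "\<And>n. n < N \<Longrightarrow> y n \<subseteq> S"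
    and theta_rv: "\<And>s. s \<in> S \<Longrightarrow> \<theta> s \<in> borel_measurable M"
    and theta_sq: "\<And>s. s \<in> S \<Longrightarrow> integrable M (\<lambda>\<omega>. (\<theta> s \<omega>)\<^sup>2)"
    and theta_mean: "\<And>s. s \<in> S \<Longrightarrow> expectation (\<theta> s) = \<mu>"
    and theta_var: "\<And>s. s \<in> S \<Longrightarrow> variance (\<theta> s) = \<tau>\<^sup>2"
    and eps_rv: "\<And>n s. n < N \<Longrightarrow> s \<in> y n \<Longrightarrow> \<epsilon> n s \<in> borel_measurable M"
    and eps_sq: "\<And>n s. n < N \<Longrightarrow> s \<in> y n \<Longrightarrow> integrable M (\<lambda>\<omega>. (\<epsilon> n s \<omega>)\<^sup>2)"
    and eps_mean: "\<And>n s. n < N \<Longrightarrow> s \<in> y n \<Longrightarrow> expectation (\<epsilon> n s) = 0"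
    and eps_cov: "\<And>n s t. n < N \<Longrightarrow> s \<in> y n \<Longrightarrow> t \<in> y n \<Longrightarrow>
                   expectation (\<lambda>\<omega>. \<epsilon> n s \<omega> * \<epsilon> n t \<omega>) = \<sigma> s t"
    and indep: "indep_vars (model_space y) (model_var y \<theta> \<epsilon>) (Inl ` S \<union> Inr ` {..<N})"
begin

lemma finite_route: "n < N \<Longrightarrow> finite (y n)"
  using finite_subset[OF routes_subset finite_segments] .

definition noise_index :: "('a + nat \<times> 'a) set" where
  "noise_index = Inl ` S \<union> Inr ` (SIGMA n:{..<N}. y n)"

definition noise :: "'a + nat \<times> 'a \<Rightarrow> 'w \<Rightarrow> real" where
  "noise i = (case i of Inl s \<Rightarrow> (\<lambda>\<omega>. \<theta> s \<omega> - \<mu>) | Inr (n, s) \<Rightarrow> \<epsilon> n s)"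

definition noise_cov :: "'a + nat \<times> 'a \<Rightarrow> 'a + nat \<times> 'a \<Rightarrow> real" where
  "noise_cov i j = (case (i, j) of
      (Inl s, Inl t) \<Rightarrow> if s = t then \<tau>\<^sup>2 else 0
    | (Inr (n, s), Inr (m, t)) \<Rightarrow> if n = m then \<sigma> s t else 0
    | _ \<Rightarrow> 0)"

lemma noise_index_cases [consumes 1, case_names segment trip]:
  assumes "i \<in> noise_index"
    and "\<And>s. i = Inl s \<Longrightarrow> s \<in> S \<Longrightarrow> P"
    and "\<And>n s. i = Inr (n, s) \<Longrightarrow> n < N \<Longrightarrow> s \<in> y n \<Longrightarrow> P"
  shows P
  using assms unfolding noise_index_def by auto

lemma finite_noise_index: "finite noise_index"
  unfolding noise_index_def using finite_segments finite_route by auto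

lemma sum_noise_index:
  "(\<Sum>i\<in>noise_index. f i) = (\<Sum>s\<in>S. f (Inl s)) + (\<Sum>n<N. \<Sum>s\<in>y n. f (Inr (n, s)))"
proof -
  have "finite (SIGMA n:{..<N}. y n)"
    using finite_route by auto
  then show ?thesis
    unfolding noise_index_def using finite_segments finite_route
    by (subst sum.union_disjoint) (auto simp: sum.reindex sum.Sigma)
qed

lemma theta_integrable: "s \<in> S \<Longrightarrow> integrable M (\<theta> s)"
  using square_integrable_imp_integrable theta_rv theta_sq by blast

lemma eps_integrable: "n < N \<Longrightarrow> s \<in> y n \<Longrightarrow> integrable M (\<epsilon> n s)"
  using square_integrable_imp_integrable eps_rv eps_sq by blast

lemma noise_measurable:
  assumes "i \<in> noise_index"
  shows "noise i \<in> borel_measurable M"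
  using assms by (cases rule: noise_index_cases) (auto simp: noise_def intro!: borel_measurable_diff theta_rv eps_rv)

lemma noise_integrable:
  assumes "i \<in> noise_index"
  shows "integrable M (noise i)"
  using assms by (cases rule: noise_index_cases) (simp_all add: noise_def theta_integrable eps_integrable)

lemma noise_square_integrable:
  assumes "i \<in> noise_index"
  shows "integrable M (\<lambda>\<omega>. (noise i \<omega>)\<^sup>2)"
  using assms
proof (cases rule: noise_index_cases)
  case (segment s)
  have "(\<lambda>\<omega>. (noise i \<omega>)\<^sup>2) = (\<lambda>\<omega>. (\<theta> s \<omega>)\<^sup>2 + (- 2 * \<mu>) * \<theta> s \<omega> + \<mu>\<^sup>2)"
    by (simp add: segment noise_def power2_eq_square algebra_simps)
  then show ?thesis
    using theta_sq theta_integrable segment by simp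
next
  case (trip n s)
  then show ?thesis
    by (simp add: noise_def eps_sq)
qed

lemma noise_mean:
  assumes "i \<in> noise_index"
  shows "expectation (noise i) = 0"
  using assms by (cases rule: noise_index_cases)
    (simp_all add: noise_def theta_integrable theta_mean eps_mean prob_space)

lemma noise_mult_integrable:
  "i \<in> noise_index \<Longrightarrow> j \<in> noise_index \<Longrightarrow> integrable M (\<lambda>\<omega>. noise i \<omega> * noise j \<omega>)"
  by (intro integrable_mult_if_square_integrable noise_measurable noise_square_integrable)

text \<open>Each noise variable is a function of the component \<^term>\<open>map_sum id fst i\<close>
  of the independent family \<^term>\<open>model_var y \<theta> \<epsilon>\<close>.\<close>

lemma indep_noise:
  assumes "i \<in> noise_index" "j \<in> noise_index" "map_sum id fst i \<noteq> map_sum id fst j"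
  shows "indep_var borel (noise i) borel (noise j)"
proof -
  define coord :: "'a + nat \<times> 'a \<Rightarrow> ('a \<Rightarrow> real) \<Rightarrow> real" where
    "coord i = (case i of Inl s \<Rightarrow> (\<lambda>h. h s - \<mu>) | Inr (n, s) \<Rightarrow> (\<lambda>h. h s))" for i
  have source: "map_sum id fst k \<in> Inl ` S \<union> Inr ` {..<N}" if "k \<in> noise_index" for k
    using that by (cases rule: noise_index_cases) auto
  have coord_measurable: "coord k \<in> borel_measurable (model_space y (map_sum id fst k))"
    if "k \<in> noise_index" for k
    using that by (cases rule: noise_index_cases)
      (auto simp: coord_def model_space_def intro!: borel_measurable_diff measurable_component_singleton)
  have noise_eq: "(\<lambda>\<omega>. coord k (model_var y \<theta> \<epsilon> (map_sum id fst k) \<omega>)) = noise k"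
    if "k \<in> noise_index" for k
    using that by (cases rule: noise_index_cases) (auto simp: coord_def model_var_def noise_def)
  show ?thesis
    using indep_var_compose_components[OF indep source source assms(3) coord_measurable coord_measurable]
      assms(1,2) by (simp add: noise_eq)
qed

lemma expectation_noise_mult:
  assumes i: "i \<in> noise_index" and j: "j \<in> noise_index"
  shows "expectation (\<lambda>\<omega>. noise i \<omega> * noise j \<omega>) = noise_cov i j"
proof (cases "map_sum id fst i = map_sum id fst j")
  case False
  have "expectation (\<lambda>\<omega>. noise i \<omega> * noise j \<omega>) = expectation (noise i) * expectation (noise j)"
    using assms False by (intro indep_var_lebesgue_integral indep_noise noise_integrable)
  also have "\<dots> = noise_cov i j"
    using noise_mean[OF i] False by (auto simp: noise_cov_def split: sum.split)
  finally show ?thesis .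
next
  case True
  from i show ?thesis
  proof (cases rule: noise_index_cases)
    case (segment s)
    with True have "j = Inl s"
      by (cases j) auto
    then show ?thesis
      using segment theta_mean[of s] theta_var[of s] by (simp add: noise_def noise_cov_def power2_eq_square)
  next
    case (trip n s)
    with True obtain t where t: "j = Inr (n, t)"
      by (cases j) auto
    with j have "t \<in> y n"
      by (auto simp: noise_index_def)
    then show ?thesis
      using trip t eps_cov by (simp add: noise_def noise_cov_def)
  qed
qed

definition affine_noise :: "real \<Rightarrow> ('a \<Rightarrow> real) \<Rightarrow> (nat \<Rightarrow> 'a \<Rightarrow> real) \<Rightarrow> 'w \<Rightarrow> real" where
  "affine_noise b a c \<omega> = b + (\<Sum>s\<in>S. a s * (\<theta> s \<omega> - \<mu>)) + (\<Sum>n<N. \<Sum>s\<in>y n. c n s * \<epsilon> n s \<omega>)"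

lemma expectation_affine_noise_square:
  "expectation (\<lambda>\<omega>. (affine_noise b a c \<omega>)\<^sup>2)
     = b\<^sup>2 + \<tau>\<^sup>2 * (\<Sum>s\<in>S. (a s)\<^sup>2) + (\<Sum>n<N. \<Sum>s\<in>y n. \<Sum>t\<in>y n. c n s * c n t * \<sigma> s t)"
proof -
  define w where "w = case_sum a (\<lambda>(n, s). c n s)"
  have affine: "affine_noise b a c \<omega> = b + (\<Sum>i\<in>noise_index. w i * noise i \<omega>)" for \<omega>
    by (simp add: affine_noise_def sum_noise_index w_def noise_def add.assoc)
  have sum_if_const: "(\<Sum>x\<in>A. if P then f x else 0) = (if P then \<Sum>x\<in>A. f x else 0)"
    for P and A :: "'a set" and f :: "'a \<Rightarrow> real"
    by simp
  have "(\<Sum>i\<in>noise_index. \<Sum>j\<in>noise_index. w i * w j * noise_cov i j)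
      = \<tau>\<^sup>2 * (\<Sum>s\<in>S. (a s)\<^sup>2) + (\<Sum>n<N. \<Sum>s\<in>y n. \<Sum>t\<in>y n. c n s * c n t * \<sigma> s t)"
    using finite_segments finite_route
    by (simp add: sum_noise_index w_def noise_cov_def if_distrib[of "(*) _"] sum.delta sum_distrib_left
        sum_if_const power2_eq_square mult_ac cong: if_cong)
  then show ?thesis
    using expectation_square_affine_comb[OF finite_noise_index noise_integrable noise_mean
        noise_mult_integrable expectation_noise_mult]
    by (simp add: affine add.assoc)
qed

lemma risk_eq_if_error_affine:
  assumes "\<And>\<omega>. \<Theta> \<omega> - (\<Sum>s\<in>yy. \<theta> s \<omega>) = affine_noise b a c \<omega>"
  shows "risk M \<theta> yy \<Theta>
     = b\<^sup>2 + \<tau>\<^sup>2 * (\<Sum>s\<in>S. (a s)\<^sup>2) + (\<Sum>n<N. \<Sum>s\<in>y n. \<Sum>t\<in>y n. c n s * c n t * \<sigma> s t)"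
  using expectation_affine_noise_square by (simp add: risk_def assms)

lemma seg_est_error:
  assumes "yy \<subseteq> S" and weight_0: "\<forall>s. \<phi> s 0 = 0"
  shows "seg_est N y \<theta> \<epsilon> \<mu> yy \<phi> \<omega> - (\<Sum>s\<in>yy. \<theta> s \<omega>)
     = affine_noise 0 (\<lambda>s. if s \<in> yy then \<phi> s (Nseg N y s) - 1 else 0)
         (\<lambda>n s. if s \<in> yy then \<phi> s (Nseg N y s) / Nseg N y s else 0) \<omega>"
proof -
  define w where "w s = \<phi> s (Nseg N y s)" for s
  have segment: "(1 - w s) * \<mu> + w s * ((\<Sum>n | n < N \<and> s \<in> y n. Tobs \<theta> \<epsilon> n s \<omega>) / Nseg N y s) - \<theta> s \<omega>
      = (w s - 1) * (\<theta> s \<omega> - \<mu>) + w s / Nseg N y s * (\<Sum>n | n < N \<and> s \<in> y n. \<epsilon> n s \<omega>)" for s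
  proof (cases "Nseg N y s = 0")
    case True
    then show ?thesis
      using weight_0 by (simp add: w_def algebra_simps)
  next
    case False
    have "(\<Sum>n | n < N \<and> s \<in> y n. Tobs \<theta> \<epsilon> n s \<omega>) = Nseg N y s * \<theta> s \<omega> + (\<Sum>n | n < N \<and> s \<in> y n. \<epsilon> n s \<omega>)"
      by (simp add: Tobs_def sum.distrib Nseg_def)
    with False show ?thesis
      by (simp add: field_simps)
  qed
  have "finite yy"
    using assms(1) finite_subset finite_segments by auto
  have theta: "(\<Sum>s\<in>yy. (w s - 1) * (\<theta> s \<omega> - \<mu>)) = (\<Sum>s\<in>S. (if s \<in> yy then w s - 1 else 0) * (\<theta> s \<omega> - \<mu>))"
    using sum.inter_restrict[OF finite_segments, of "\<lambda>s. (w s - 1) * (\<theta> s \<omega> - \<mu>)" yy] assms(1)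
    by (auto simp: Int_absorb1 intro!: sum.cong)
  have eps: "(\<Sum>s\<in>yy. w s / Nseg N y s * (\<Sum>n | n < N \<and> s \<in> y n. \<epsilon> n s \<omega>))
      = (\<Sum>n<N. \<Sum>s\<in>y n. (if s \<in> yy then w s / Nseg N y s else 0) * \<epsilon> n s \<omega>)"
    using \<open>finite yy\<close> finite_route by (rule sum_weighted_routes_swap)
  have "seg_est N y \<theta> \<epsilon> \<mu> yy \<phi> \<omega> - (\<Sum>s\<in>yy. \<theta> s \<omega>)
      = (\<Sum>s\<in>yy. (1 - w s) * \<mu> + w s * ((\<Sum>n | n < N \<and> s \<in> y n. Tobs \<theta> \<epsilon> n s \<omega>) / Nseg N y s) - \<theta> s \<omega>)"
    unfolding seg_est_def w_def[symmetric] by (simp only: sum_subtractf)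
  also have "\<dots> = (\<Sum>s\<in>yy. (w s - 1) * (\<theta> s \<omega> - \<mu>))
      + (\<Sum>s\<in>yy. w s / Nseg N y s * (\<Sum>n | n < N \<and> s \<in> y n. \<epsilon> n s \<omega>))"
    by (simp only: segment sum.distrib)
  also have "\<dots> = affine_noise 0 (\<lambda>s. if s \<in> yy then w s - 1 else 0)
      (\<lambda>n s. if s \<in> yy then w s / Nseg N y s else 0) \<omega>"
    unfolding affine_noise_def theta eps by simp
  finally show ?thesis
    by (simp only: w_def)
qed

lemma route_est_error:
  fixes \<phi> :: "nat \<Rightarrow> real" and D :: "'a set set"
  assumes "yy \<subseteq> S"
  defines "q \<equiv> \<phi> (Mnb N y D) / Mnb N y D"
  shows "route_est N y \<theta> \<epsilon> \<mu> yy D \<phi> \<omega> - (\<Sum>s\<in>yy. \<theta> s \<omega>)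
     = affine_noise ((q * (\<Sum>n | n < N \<and> y n \<in> D. real (card (y n))) - \<phi> (Mnb N y D) * card yy) * \<mu>)
         (\<lambda>s. q * Nseg_nb N y D s - (if s \<in> yy then 1 else 0)) (\<lambda>n s. if y n \<in> D then q else 0) \<omega>"
proof -
  define Dn where "Dn = {n. n < N \<and> y n \<in> D}"
  define E where "E = (\<Sum>n\<in>Dn. \<Sum>s\<in>y n. \<epsilon> n s \<omega>)"
  have "finite Dn"
    by (simp add: Dn_def)
  have centred: "(\<Sum>n\<in>Dn. \<Sum>s\<in>y n. \<theta> s \<omega> - \<mu>) = (\<Sum>s\<in>S. Nseg_nb N y D s * (\<theta> s \<omega> - \<mu>))"
    using sum_routes_eq_sum_card[OF finite_segments \<open>finite Dn\<close>] routes_subset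
    by (simp add: Dn_def Nseg_nb_def conj_assoc)
  have "(\<Sum>n\<in>Dn. \<Sum>s\<in>y n. Tobs \<theta> \<epsilon> n s \<omega>) = (\<Sum>n\<in>Dn. \<Sum>s\<in>y n. \<mu> + (\<theta> s \<omega> - \<mu>) + \<epsilon> n s \<omega>)"
    by (simp add: Tobs_def)
  also have "\<dots> = (\<Sum>n\<in>Dn. real (card (y n))) * \<mu> + (\<Sum>s\<in>S. Nseg_nb N y D s * (\<theta> s \<omega> - \<mu>)) + E"
    by (simp only: sum.distrib sum_constant centred E_def sum_distrib_right)
  finally have observed: "(\<Sum>n\<in>Dn. \<Sum>s\<in>y n. Tobs \<theta> \<epsilon> n s \<omega>)
      = (\<Sum>n\<in>Dn. real (card (y n))) * \<mu> + (\<Sum>s\<in>S. Nseg_nb N y D s * (\<theta> s \<omega> - \<mu>)) + E" .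
  have "finite yy"
    using assms(1) finite_subset finite_segments by auto
  have target: "(\<Sum>s\<in>yy. \<theta> s \<omega>) = card yy * \<mu> + (\<Sum>s\<in>S. (if s \<in> yy then 1 else 0) * (\<theta> s \<omega> - \<mu>))"
    using sum.inter_restrict[OF finite_segments, of "\<lambda>s. \<theta> s \<omega> - \<mu>" yy] assms(1)
    by (simp add: Int_absorb1 sum_subtractf if_distrib[of "\<lambda>c. c * _"] cong: if_cong)
  have "q * E = (\<Sum>n\<in>{n\<in>{..<N}. y n \<in> D}. \<Sum>s\<in>y n. q * \<epsilon> n s \<omega>)"
    by (simp add: E_def Dn_def sum_distrib_left)
  also have "\<dots> = (\<Sum>n<N. if y n \<in> D then \<Sum>s\<in>y n. q * \<epsilon> n s \<omega> else 0)"
    by (simp only: sum.inter_filter[OF finite_lessThan])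
  also have "\<dots> = (\<Sum>n<N. \<Sum>s\<in>y n. (if y n \<in> D then q else 0) * \<epsilon> n s \<omega>)"
    by (intro sum.cong) auto
  finally have errors: "q * E = (\<Sum>n<N. \<Sum>s\<in>y n. (if y n \<in> D then q else 0) * \<epsilon> n s \<omega>)" .
  have "route_est N y \<theta> \<epsilon> \<mu> yy D \<phi> \<omega> = (1 - \<phi> (Mnb N y D)) * card yy * \<mu>
      + q * ((\<Sum>n\<in>Dn. real (card (y n))) * \<mu> + (\<Sum>s\<in>S. Nseg_nb N y D s * (\<theta> s \<omega> - \<mu>)) + E)"
    unfolding route_est_def Dn_def[symmetric] observed by (simp add: q_def)
  then show ?thesis
    unfolding affine_noise_def Dn_def[symmetric] target errors[symmetric]
    by (simp add: algebra_simps sum_subtractf sum.distrib sum_distrib_left)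
qed

lemma risk_seg_est:
  assumes "yy \<subseteq> S" and "\<forall>s. \<phi> s 0 = 0"
  shows "risk M \<theta> yy (seg_est N y \<theta> \<epsilon> \<mu> yy \<phi>)
     = \<tau>\<^sup>2 * (\<Sum>s\<in>yy. (\<phi> s (Nseg N y s) - 1)\<^sup>2)
       + (\<Sum>s\<in>yy. \<Sum>t\<in>yy. real (Npair N y s t)
            * (\<phi> s (Nseg N y s) / Nseg N y s) * (\<phi> t (Nseg N y t) / Nseg N y t) * \<sigma> s t)"
proof -
  define w where "w s = \<phi> s (Nseg N y s) / Nseg N y s" for s
  have "finite yy"
    using assms(1) finite_subset finite_segments by auto
  have theta: "(\<Sum>s\<in>S. (if s \<in> yy then \<phi> s (Nseg N y s) - 1 else 0)\<^sup>2) = (\<Sum>s\<in>yy. (\<phi> s (Nseg N y s) - 1)\<^sup>2)"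
    using sum.inter_restrict[OF finite_segments, of "\<lambda>s. (\<phi> s (Nseg N y s) - 1)\<^sup>2" yy] assms(1)
    by (simp add: Int_absorb1 if_distrib[of power2] cong: if_cong)
  have "(\<Sum>n<N. \<Sum>s\<in>y n. \<Sum>t\<in>y n. (if s \<in> yy then w s else 0) * (if t \<in> yy then w t else 0) * \<sigma> s t)
      = (\<Sum>n<N. \<Sum>s\<in>y n \<inter> yy. \<Sum>t\<in>y n \<inter> yy. w s * w t * \<sigma> s t)"
    by (auto simp: sum.inter_restrict finite_route intro!: sum.cong)
  also have "\<dots> = (\<Sum>s\<in>yy. \<Sum>t\<in>yy. real (Npair N y s t) * w s * w t * \<sigma> s t)"
    using sum_routes_pairs_eq_sum_card[OF \<open>finite yy\<close> finite_lessThan]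
    by (simp add: Npair_def mult.assoc)
  finally have pairs: "(\<Sum>n<N. \<Sum>s\<in>y n. \<Sum>t\<in>y n. (if s \<in> yy then w s else 0) * (if t \<in> yy then w t else 0) * \<sigma> s t)
      = (\<Sum>s\<in>yy. \<Sum>t\<in>yy. real (Npair N y s t) * w s * w t * \<sigma> s t)" .
  show ?thesis
    using risk_eq_if_error_affine[OF seg_est_error[where \<phi> = \<phi>, OF assms]] pairs
    unfolding w_def by (simp add: theta)
qed

lemma sum_Npair_nb_le:
  assumes "yy \<subseteq> S" and \<sigma>_nonneg: "\<And>s t. s \<in> S \<Longrightarrow> t \<in> S \<Longrightarrow> 0 \<le> \<sigma> s t"
  shows "(\<Sum>s\<in>yy. \<Sum>t\<in>yy. real (Npair_nb N y D s t) * \<sigma> s t)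
       \<le> (\<Sum>n | n < N \<and> y n \<in> D. \<Sum>s\<in>y n. \<Sum>t\<in>y n. \<sigma> s t)"
proof -
  define Dn where "Dn = {n. n < N \<and> y n \<in> D}"
  have "finite yy"
    using assms(1) finite_subset finite_segments by auto
  have "(\<Sum>s\<in>yy. \<Sum>t\<in>yy. real (Npair_nb N y D s t) * \<sigma> s t)
      = (\<Sum>n\<in>Dn. \<Sum>s\<in>y n \<inter> yy. \<Sum>t\<in>y n \<inter> yy. \<sigma> s t)"
    using sum_routes_pairs_eq_sum_card[OF \<open>finite yy\<close>, of Dn]
    by (simp add: Dn_def Npair_nb_def conj_assoc)
  also have "\<dots> \<le> (\<Sum>n\<in>Dn. \<Sum>s\<in>y n. \<Sum>t\<in>y n. \<sigma> s t)"
  proof (rule sum_mono)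
    fix n assume n: "n \<in> Dn"
    then have nonneg: "0 \<le> \<sigma> s t" if "s \<in> y n" "t \<in> y n" for s t
      using that routes_subset \<sigma>_nonneg by (force simp: Dn_def)
    have "finite (y n)"
      using n finite_route by (simp add: Dn_def)
    then have "(\<Sum>s\<in>y n \<inter> yy. \<Sum>t\<in>y n \<inter> yy. \<sigma> s t) \<le> (\<Sum>s\<in>y n \<inter> yy. \<Sum>t\<in>y n. \<sigma> s t)"
      using nonneg by (intro sum_mono sum_mono2) auto
    also have "\<dots> \<le> (\<Sum>s\<in>y n. \<Sum>t\<in>y n. \<sigma> s t)"
      using nonneg \<open>finite (y n)\<close> by (intro sum_mono2 sum_nonneg) auto
    finally show "(\<Sum>s\<in>y n \<inter> yy. \<Sum>t\<in>y n \<inter> yy. \<sigma> s t) \<le> (\<Sum>s\<in>y n. \<Sum>t\<in>y n. \<sigma> s t)" .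
  qed
  finally show ?thesis
    by (simp add: Dn_def)
qed

lemma risk_route_est_ge:
  fixes \<phi> :: "nat \<Rightarrow> real" and D :: "'a set set"
  assumes "yy \<subseteq> S" and \<sigma>_nonneg: "\<And>s t. s \<in> S \<Longrightarrow> t \<in> S \<Longrightarrow> 0 \<le> \<sigma> s t"
  defines "q \<equiv> \<phi> (Mnb N y D) / Mnb N y D"
  shows "\<tau>\<^sup>2 * (\<Sum>s\<in>yy. (q * Nseg_nb N y D s - 1)\<^sup>2)
           + (\<Sum>s\<in>yy. \<Sum>t\<in>yy. real (Npair_nb N y D s t) * q\<^sup>2 * \<sigma> s t)
         \<le> risk M \<theta> yy (route_est N y \<theta> \<epsilon> \<mu> yy D \<phi>)"
proof -
  have "(\<Sum>s\<in>yy. (q * Nseg_nb N y D s - 1)\<^sup>2) = (\<Sum>s\<in>yy. (q * Nseg_nb N y D s - (if s \<in> yy then 1 else 0))\<^sup>2)"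
    by simp
  also have "\<dots> \<le> (\<Sum>s\<in>S. (q * Nseg_nb N y D s - (if s \<in> yy then 1 else 0))\<^sup>2)"
    using assms(1) by (intro sum_mono2 finite_segments) auto
  finally have theta: "\<tau>\<^sup>2 * (\<Sum>s\<in>yy. (q * Nseg_nb N y D s - 1)\<^sup>2)
      \<le> \<tau>\<^sup>2 * (\<Sum>s\<in>S. (q * Nseg_nb N y D s - (if s \<in> yy then 1 else 0))\<^sup>2)"
    by (simp add: mult_left_mono)
  have "(\<Sum>s\<in>yy. \<Sum>t\<in>yy. real (Npair_nb N y D s t) * q\<^sup>2 * \<sigma> s t)
      = q\<^sup>2 * (\<Sum>s\<in>yy. \<Sum>t\<in>yy. real (Npair_nb N y D s t) * \<sigma> s t)"
    by (simp add: sum_distrib_left mult_ac)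
  also have "\<dots> \<le> q\<^sup>2 * (\<Sum>n | n < N \<and> y n \<in> D. \<Sum>s\<in>y n. \<Sum>t\<in>y n. \<sigma> s t)"
    using assms(1) \<sigma>_nonneg by (intro mult_left_mono sum_Npair_nb_le) auto
  also have "\<dots> = (\<Sum>n<N. \<Sum>s\<in>y n. \<Sum>t\<in>y n.
      (if y n \<in> D then q else 0) * (if y n \<in> D then q else 0) * \<sigma> s t)"
  proof -
    have trips: "{n. n < N \<and> y n \<in> D} = {n\<in>{..<N}. y n \<in> D}"
      by auto
    show ?thesis
      unfolding trips sum_distrib_left sum.inter_filter[OF finite_lessThan]
      by (intro sum.cong) (auto simp: power2_eq_square sum_distrib_left)
  qed
  finally have eps: "(\<Sum>s\<in>yy. \<Sum>t\<in>yy. real (Npair_nb N y D s t) * q\<^sup>2 * \<sigma> s t)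
      \<le> (\<Sum>n<N. \<Sum>s\<in>y n. \<Sum>t\<in>y n.
            (if y n \<in> D then q else 0) * (if y n \<in> D then q else 0) * \<sigma> s t)" .
  show ?thesis
    unfolding risk_eq_if_error_affine[OF route_est_error[where \<phi> = \<phi> and D = D, OF assms(1), folded q_def]]
    by (intro add_mono add_increasing zero_le_power2 theta eps)
qed

lemma seg_est_risk_le_route_est_risk:
  fixes \<phi> :: "nat \<Rightarrow> real" and D :: "'a set set"
  assumes "yy \<subseteq> S" and \<sigma>_nonneg: "\<And>s t. s \<in> S \<Longrightarrow> t \<in> S \<Longrightarrow> 0 \<le> \<sigma> s t"
    and nbhd: "\<And>s t. s \<in> yy \<Longrightarrow> t \<in> yy \<Longrightarrow>
       Npair N y s t * Nseg_nb N y D s * Nseg_nb N y D t \<le> Npair_nb N y D s t * Nseg N y s * Nseg N y t"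
  obtains \<phi>' where "\<forall>s. \<phi>' s 0 = 0"
    and "risk M \<theta> yy (seg_est N y \<theta> \<epsilon> \<mu> yy \<phi>') \<le> risk M \<theta> yy (route_est N y \<theta> \<epsilon> \<mu> yy D \<phi>)"
proof -
  define q where "q = \<phi> (Mnb N y D) / Mnb N y D"
  define \<phi>' where "\<phi>' s k = (if k = 0 then 0 else q * Nseg_nb N y D s)" for s and k :: nat
  have weight_0: "\<forall>s. \<phi>' s 0 = 0"
    by (simp add: \<phi>'_def)
  have weight: "\<phi>' s (Nseg N y s) = q * Nseg_nb N y D s" for s
    using Nseg_nb_le_Nseg[of N y D s] by (auto simp: \<phi>'_def)
  have "risk M \<theta> yy (seg_est N y \<theta> \<epsilon> \<mu> yy \<phi>')
      = \<tau>\<^sup>2 * (\<Sum>s\<in>yy. (q * Nseg_nb N y D s - 1)\<^sup>2)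
        + (\<Sum>s\<in>yy. \<Sum>t\<in>yy. real (Npair N y s t) * (q * Nseg_nb N y D s / Nseg N y s)
             * (q * Nseg_nb N y D t / Nseg N y t) * \<sigma> s t)"
    using risk_seg_est[where \<phi> = \<phi>', OF assms(1) weight_0] by (simp add: weight)
  also have "\<dots> \<le> \<tau>\<^sup>2 * (\<Sum>s\<in>yy. (q * Nseg_nb N y D s - 1)\<^sup>2)
        + (\<Sum>s\<in>yy. \<Sum>t\<in>yy. real (Npair_nb N y D s t) * q\<^sup>2 * \<sigma> s t)"
  proof (intro add_left_mono sum_mono)
    fix s t assume "s \<in> yy" "t \<in> yy"
    with assms(1) show "real (Npair N y s t) * (q * Nseg_nb N y D s / Nseg N y s) * (q * Nseg_nb N y D t / Nseg N y t)
        * \<sigma> s t \<le> real (Npair_nb N y D s t) * q\<^sup>2 * \<sigma> s t"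
      by (intro scaled_pair_count_le \<sigma>_nonneg nbhd) auto
  qed
  also have "\<dots> \<le> risk M \<theta> yy (route_est N y \<theta> \<epsilon> \<mu> yy D \<phi>)"
    unfolding q_def by (rule risk_route_est_ge[OF assms(1) \<sigma>_nonneg])
  finally show thesis
    using that weight_0 by blast
qed

end

theorem theorem2p5:
  fixes M :: "'w measure"
    and S :: "'a set" and N :: nat and y :: "nat \<Rightarrow> 'a set"
    and \<theta> :: "'a \<Rightarrow> 'w \<Rightarrow> real" and \<epsilon> :: "nat \<Rightarrow> 'a \<Rightarrow> 'w \<Rightarrow> real"
    and \<mu> \<tau> :: real and \<sigma> :: "'a \<Rightarrow> 'a \<Rightarrow> real"
    and yy :: "'a set" and D :: "'a set set"
  assumes P: "prob_space M"
    and S_fin: "finite S"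
    and routes: "\<And>n. n < N \<Longrightarrow> y n \<subseteq> S \<and> y n \<noteq> {}"
    and route_y: "yy \<subseteq> S" "yy \<noteq> {}"
    and theta_rv: "\<And>s. s \<in> S \<Longrightarrow> \<theta> s \<in> borel_measurable M"
    and theta_sq: "\<And>s. s \<in> S \<Longrightarrow> integrable M (\<lambda>\<omega>. (\<theta> s \<omega>)\<^sup>2)"
    and theta_id: "\<And>s t. s \<in> S \<Longrightarrow> t \<in> S \<Longrightarrow> distr M borel (\<theta> s) = distr M borel (\<theta> t)"
    and theta_mean: "\<And>s. s \<in> S \<Longrightarrow> prob_space.expectation M (\<theta> s) = \<mu>"
    and theta_var: "\<And>s. s \<in> S \<Longrightarrow> prob_space.variance M (\<theta> s) = \<tau>\<^sup>2"
    and tau_pos: "\<tau>\<^sup>2 > 0"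
    and eps_rv: "\<And>n s. n < N \<Longrightarrow> s \<in> y n \<Longrightarrow> \<epsilon> n s \<in> borel_measurable M"
    and eps_sq: "\<And>n s. n < N \<Longrightarrow> s \<in> y n \<Longrightarrow> integrable M (\<lambda>\<omega>. (\<epsilon> n s \<omega>)\<^sup>2)"
    and eps_mean: "\<And>n s. n < N \<Longrightarrow> s \<in> y n \<Longrightarrow> prob_space.expectation M (\<epsilon> n s) = 0"
    and eps_cov: "\<And>n s t. n < N \<Longrightarrow> s \<in> y n \<Longrightarrow> t \<in> y n \<Longrightarrow>
                   prob_space.expectation M (\<lambda>\<omega>. \<epsilon> n s \<omega> * \<epsilon> n t \<omega>) = \<sigma> s t"
    and indep: "prob_space.indep_vars M (model_space y) (model_var y \<theta> \<epsilon>) (Inl ` S \<union> Inr ` {..<N})"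
    and sigma_nonneg: "\<And>s t. s \<in> S \<Longrightarrow> t \<in> S \<Longrightarrow> \<sigma> s t \<ge> 0"
    and nbhd: "\<And>s t. s \<in> yy \<Longrightarrow> t \<in> yy \<Longrightarrow>
       Npair N y s t * Nseg_nb N y D s * Nseg_nb N y D t \<le> Npair_nb N y D s t * Nseg N y s * Nseg N y t"
  shows "(INF \<phi>\<in>{\<phi> :: 'a \<Rightarrow> nat \<Rightarrow> real. \<forall>s. \<phi> s 0 = 0}. risk M \<theta> yy (seg_est N y \<theta> \<epsilon> \<mu> yy \<phi>))
       \<le> (INF \<phi>\<in>{\<phi> :: nat \<Rightarrow> real. \<phi> 0 = 0}. risk M \<theta> yy (route_est N y \<theta> \<epsilon> \<mu> yy D \<phi>))"
proof -
  interpret travel_time_model M S N y \<theta> \<epsilon> \<mu> \<tau> \<sigma>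
    using P S_fin routes theta_rv theta_sq theta_mean theta_var eps_rv eps_sq eps_mean eps_cov indep
    by (intro travel_time_model.intro travel_time_model_axioms.intro) simp_all
  have bdd: "bdd_below ((\<lambda>\<phi>. risk M \<theta> yy (seg_est N y \<theta> \<epsilon> \<mu> yy \<phi>)) ` {\<phi>. \<forall>s. \<phi> s 0 = 0})"
    by (intro bdd_belowI[of _ 0]) (auto simp: risk_def)
  show ?thesis
  proof (rule cINF_greatest)
    fix \<phi> :: "nat \<Rightarrow> real"
    obtain \<phi>' where "\<forall>s. \<phi>' s 0 = 0"
      and "risk M \<theta> yy (seg_est N y \<theta> \<epsilon> \<mu> yy \<phi>') \<le> risk M \<theta> yy (route_est N y \<theta> \<epsilon> \<mu> yy D \<phi>)"
      using seg_est_risk_le_route_est_risk[OF route_y(1) sigma_nonneg nbhd] .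
    then show "(INF \<phi>\<in>{\<phi>. \<forall>s. \<phi> s 0 = 0}. risk M \<theta> yy (seg_est N y \<theta> \<epsilon> \<mu> yy \<phi>))
        \<le> risk M \<theta> yy (route_est N y \<theta> \<epsilon> \<mu> yy D \<phi>)"
      by (intro cINF_lower2[OF bdd]) auto
  qed auto
qed

end
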